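(* Let $1\le n_1\le n$ and let $([n_1],v,e),([n_1],u,g)$ be graphs. Extend both to size $n$ by $v_i=u_i=x_*$ for $n_1+1\le i\le n$ and $e_{ii'}=g_{ii'}=y_0$ whenever $\max\{i,i'\}\ge n_1+1$. Then $D_n(([n],v,e),([n],u,g))\le D_{n_1}(([n_1],v,e),([n_1],u,g))$.
   Context: $(\mathcal X,d_{\mathcal X})$, $(\mathcal Y,d_{\mathcal Y})$ are pseudometric spaces with $\mathrm{diam}(\mathcal X)\le C_{\mathcal X}$, $\mathrm{diam}(\mathcal Y)\le C_{\mathcal Y}$, $y_0\in\mathcal Y$ a distinguished "no edge" element, $p\ge1$, $C_2^p\ge C_{\mathcal X}^p+C_{\mathcal Y}^p$. A new point $x_*\notin\mathcal X$ is adjoined with $d_{\mathcal X}(x,x_* )=d_{\mathcal X}(x_*,x)=C_2$ for $x\in\mathcal X$, $d_{\mathcal X}(x_*,x_* )=0$. A graph $([n],v,e)$ has $v:[n]\to\mathcal X\cup\{x_*\}$ and symmetric $e:[n]^2\to\mathcal Y$ with $e_{ii}=y_0$; $S_n$ is the set of permutations of $[n]=\{1,\dots,n\}$. For two graphs of equal size $N\ge1$, $$D_N\big(([N],a,g),([N],b,h)\big)=N^{-1/p}\min_{\pi\in S_N}\Big[\sum_{i\in[N]}d_{\mathcal X}(a_i,b_{\pi(i)})^p+\frac{1}{2(N-1)}\sum_{(i,i')\in[N]^2}d_{\mathcal Y}(g_{ii'},h_{\pi(i)\pi(i')})^p\Big]^{1/p},$$ with $0/0:=0$. *)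

theory Defs
  imports "HOL-Combinatorics.Permutations" Complex_Main
begin

definition pseudometric :: "('a \<Rightarrow> 'a \<Rightarrow> real) \<Rightarrow> bool" where
  "pseudometric d \<longleftrightarrow> (\<forall>x. d x x = 0) \<and> (\<forall>x y. 0 \<le> d x y) \<and> (\<forall>x y. d x y = d y x)
     \<and> (\<forall>x y z. d x z \<le> d x y + d y z)"

text \<open>The space X extended by the new point x_*, modelled as None.\<close>
fun dXstar :: "('x \<Rightarrow> 'x \<Rightarrow> real) \<Rightarrow> real \<Rightarrow> 'x option \<Rightarrow> 'x option \<Rightarrow> real" where
  "dXstar dX C2 (Some a) (Some b) = dX a b"
| "dXstar dX C2 None None = 0"
| "dXstar dX C2 (Some a) None = C2"
| "dXstar dX C2 None (Some b) = C2"

definition is_graph :: "'y \<Rightarrow> nat \<Rightarrow> (nat \<Rightarrow> 'x option) \<Rightarrow> (nat \<Rightarrow> nat \<Rightarrow> 'y) \<Rightarrow> bool" where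
  "is_graph y0 n v e \<longleftrightarrow> (\<forall>i\<in>{1..n}. \<forall>i'\<in>{1..n}. e i i' = e i' i) \<and> (\<forall>i\<in>{1..n}. e i i = y0)"

definition match_cost ::
  "('x \<Rightarrow> 'x \<Rightarrow> real) \<Rightarrow> real \<Rightarrow> ('y \<Rightarrow> 'y \<Rightarrow> real) \<Rightarrow> real \<Rightarrow> nat
   \<Rightarrow> (nat \<Rightarrow> 'x option) \<Rightarrow> (nat \<Rightarrow> nat \<Rightarrow> 'y) \<Rightarrow> (nat \<Rightarrow> 'x option) \<Rightarrow> (nat \<Rightarrow> nat \<Rightarrow> 'y)
   \<Rightarrow> (nat \<Rightarrow> nat) \<Rightarrow> real" where
  "match_cost dX C2 dY p N a g b h \<pi> =
     (\<Sum>i\<in>{1..N}. dXstar dX C2 (a i) (b (\<pi> i)) powr p)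
     + 1 / (2 * (real N - 1)) *
       (\<Sum>i\<in>{1..N}. \<Sum>i'\<in>{1..N}. dY (g i i') (h (\<pi> i) (\<pi> i')) powr p)"

text \<open>D_N; note that in Isabelle x / 0 = 0, matching the convention 0/0 := 0.\<close>
definition D ::
  "('x \<Rightarrow> 'x \<Rightarrow> real) \<Rightarrow> real \<Rightarrow> ('y \<Rightarrow> 'y \<Rightarrow> real) \<Rightarrow> real \<Rightarrow> nat
   \<Rightarrow> (nat \<Rightarrow> 'x option) \<Rightarrow> (nat \<Rightarrow> nat \<Rightarrow> 'y) \<Rightarrow> (nat \<Rightarrow> 'x option) \<Rightarrow> (nat \<Rightarrow> nat \<Rightarrow> 'y)
   \<Rightarrow> real" where
  "D dX C2 dY p N a g b h =
     real N powr (- 1 / p) *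
     (Min ((\<lambda>\<pi>. match_cost dX C2 dY p N a g b h \<pi>) ` {\<pi>. \<pi> permutes {1..N}})) powr (1 / p)"

definition ext_v :: "nat \<Rightarrow> (nat \<Rightarrow> 'x option) \<Rightarrow> nat \<Rightarrow> 'x option" where
  "ext_v n1 v i = (if i \<le> n1 then v i else None)"

definition ext_e :: "'y \<Rightarrow> nat \<Rightarrow> (nat \<Rightarrow> nat \<Rightarrow> 'y) \<Rightarrow> nat \<Rightarrow> nat \<Rightarrow> 'y" where
  "ext_e y0 n1 e i i' = (if max i i' \<le> n1 then e i i' else y0)"

end

theory Submission
  imports Defs
begin

text \<open>Extend a permutation that is optimal for the small graphs by the identity on
  \<open>{n1+1..n}\<close>. The padded vertices are then matched to each other, so with \<open>d(x_*,x_*) = 0\<close> and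
  \<open>d(y0,y0) = 0\<close> both the vertex and the edge part of the matching cost are unchanged, while
  the normalising factors \<open>1/(2(N-1))\<close> and \<open>1/N\<close> only decrease as \<open>N\<close> grows from \<open>n1\<close> to \<open>n\<close>.
  For \<open>n1 = 1\<close> the edge factor is a junk value, but then the edge part is \<open>d(y0,y0) = 0\<close>.\<close>

definition vertex_cost ::
  "('x \<Rightarrow> 'x \<Rightarrow> real) \<Rightarrow> real \<Rightarrow> real \<Rightarrow> nat \<Rightarrow> (nat \<Rightarrow> 'x option) \<Rightarrow> (nat \<Rightarrow> 'x option)
   \<Rightarrow> (nat \<Rightarrow> nat) \<Rightarrow> real" where
  "vertex_cost dX C2 p N a b \<pi> = (\<Sum>i\<in>{1..N}. dXstar dX C2 (a i) (b (\<pi> i)) powr p)"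

definition edge_cost ::
  "('y \<Rightarrow> 'y \<Rightarrow> real) \<Rightarrow> real \<Rightarrow> nat \<Rightarrow> (nat \<Rightarrow> nat \<Rightarrow> 'y) \<Rightarrow> (nat \<Rightarrow> nat \<Rightarrow> 'y)
   \<Rightarrow> (nat \<Rightarrow> nat) \<Rightarrow> real" where
  "edge_cost dY p N g h \<pi> = (\<Sum>i\<in>{1..N}. \<Sum>i'\<in>{1..N}. dY (g i i') (h (\<pi> i) (\<pi> i')) powr p)"

lemma match_cost_split:
  "match_cost dX C2 dY p N a g b h \<pi>
     = vertex_cost dX C2 p N a b \<pi> + 1 / (2 * (real N - 1)) * edge_cost dY p N g h \<pi>"
  unfolding match_cost_def vertex_cost_def edge_cost_def ..

lemma vertex_cost_nonneg: "0 \<le> vertex_cost dX C2 p N a b \<pi>"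
  unfolding vertex_cost_def by (intro sum_nonneg) simp

lemma edge_cost_nonneg: "0 \<le> edge_cost dY p N g h \<pi>"
  unfolding edge_cost_def by (intro sum_nonneg) simp

lemma match_cost_nonneg: "0 \<le> match_cost dX C2 dY p N a g b h \<pi>"
proof (cases "N = 0")
  case False
  then show ?thesis unfolding match_cost_split
    by (intro add_nonneg_nonneg mult_nonneg_nonneg vertex_cost_nonneg edge_cost_nonneg) auto
qed (simp add: match_cost_def)

lemma powr_neg_mult_powr:
  fixes x y :: real
  assumes "0 \<le> x" "0 \<le> y"
  shows "y powr (- a) * x powr a = (x / y) powr a"
  using assms by (subst powr_divide) (simp_all add: powr_minus_divide)

lemma D_eq_root:
  "D dX C2 dY p N a g b h
     = (Min ((\<lambda>\<pi>. match_cost dX C2 dY p N a g b h \<pi>) ` {\<pi>. \<pi> permutes {1..N}}) / real N) powr (1 / p)"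
proof -
  let ?costs = "(\<lambda>\<pi>. match_cost dX C2 dY p N a g b h \<pi>) ` {\<pi>. \<pi> permutes {1..N}}"
  have "finite ?costs" "?costs \<noteq> {}"
    by (simp_all add: finite_permutations) (meson permutes_id)
  then have "0 \<le> Min ?costs"
    by (auto simp: Min_ge_iff match_cost_nonneg)
  then show ?thesis
    unfolding D_def using powr_neg_mult_powr[of "Min ?costs" "real N" "1 / p"] by simp
qed

lemma D_le_match_cost:
  assumes "\<pi> permutes {1..N}" and "p > 0"
  shows "D dX C2 dY p N a g b h \<le> (match_cost dX C2 dY p N a g b h \<pi> / real N) powr (1 / p)"
proof -
  let ?costs = "(\<lambda>\<sigma>. match_cost dX C2 dY p N a g b h \<sigma>) ` {\<sigma>. \<sigma> permutes {1..N}}"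
  have "finite ?costs" "?costs \<noteq> {}"
    by (simp_all add: finite_permutations) (meson permutes_id)
  then have "0 \<le> Min ?costs" "Min ?costs \<le> match_cost dX C2 dY p N a g b h \<pi>"
    using assms(1) by (auto simp: Min_ge_iff match_cost_nonneg intro!: Min_le)
  then show ?thesis
    unfolding D_eq_root using assms(2) by (intro powr_mono2 divide_right_mono) auto
qed

lemma D_attained:
  obtains \<pi> where "\<pi> permutes {1..N}"
    and "D dX C2 dY p N a g b h = (match_cost dX C2 dY p N a g b h \<pi> / real N) powr (1 / p)"
proof -
  let ?costs = "(\<lambda>\<sigma>. match_cost dX C2 dY p N a g b h \<sigma>) ` {\<sigma>. \<sigma> permutes {1..N}}"
  have "Min ?costs \<in> ?costs"
    by (rule Min_in) (simp_all add: finite_permutations, meson permutes_id)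
  then show ?thesis
    using that unfolding D_eq_root by auto
qed

lemma permutes_le_iff:
  assumes "\<pi> permutes {1..n1}"
  shows "\<pi> i \<le> n1 \<longleftrightarrow> i \<le> n1"
proof (cases "i \<in> {1..n1}")
  case True
  then show ?thesis using permutes_in_image[OF assms] by auto
next
  case False
  then show ?thesis using permutes_not_in[OF assms] by auto
qed

lemma sum_if_le_atLeastAtMost:
  fixes m n1 n :: nat
  assumes "n1 \<le> n"
  shows "(\<Sum>i\<in>{m..n}. if i \<le> n1 then f i else 0) = (\<Sum>i\<in>{m..n1}. f i)"
  by (rule sum.mono_neutral_cong_right) (use assms in auto)

lemma vertex_cost_ext:
  assumes "\<pi> permutes {1..n1}" and "n1 \<le> n"
  shows "vertex_cost dX C2 p n (ext_v n1 a) (ext_v n1 b) \<pi> = vertex_cost dX C2 p n1 a b \<pi>"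
proof -
  have "dXstar dX C2 (ext_v n1 a i) (ext_v n1 b (\<pi> i)) powr p
      = (if i \<le> n1 then dXstar dX C2 (a i) (b (\<pi> i)) powr p else 0)" for i
    using permutes_le_iff[OF assms(1), of i] by (simp add: ext_v_def)
  then show ?thesis
    unfolding vertex_cost_def by (simp add: sum_if_le_atLeastAtMost[OF assms(2)])
qed

lemma edge_cost_ext:
  assumes "\<pi> permutes {1..n1}" and "n1 \<le> n" and "dY y0 y0 = 0"
  shows "edge_cost dY p n (ext_e y0 n1 g) (ext_e y0 n1 h) \<pi> = edge_cost dY p n1 g h \<pi>"
proof -
  have "dY (ext_e y0 n1 g i i') (ext_e y0 n1 h (\<pi> i) (\<pi> i')) powr p
      = (if i \<le> n1 \<and> i' \<le> n1 then dY (g i i') (h (\<pi> i) (\<pi> i')) powr p else 0)"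
    for i i'
    using permutes_le_iff[OF assms(1), of i] permutes_le_iff[OF assms(1), of i'] assms(3)
    by (simp add: ext_e_def)
  then have "(\<Sum>i'\<in>{1..n}. dY (ext_e y0 n1 g i i') (ext_e y0 n1 h (\<pi> i) (\<pi> i')) powr p)
      = (if i \<le> n1 then \<Sum>i'\<in>{1..n1}. dY (g i i') (h (\<pi> i) (\<pi> i')) powr p else 0)" for i
    by (simp add: sum_if_le_atLeastAtMost[OF assms(2)])
  then show ?thesis
    unfolding edge_cost_def by (simp add: sum_if_le_atLeastAtMost[OF assms(2)])
qed

lemma edge_cost_single_vertex:
  assumes "\<pi> permutes {1..1}" and "dY y0 y0 = 0" and "g 1 1 = y0" and "h 1 1 = y0"
  shows "edge_cost dY p 1 g h \<pi> = 0"
proof -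
  have "\<pi> 1 = 1" using permutes_in_image[OF assms(1), of 1] by simp
  then show ?thesis using assms(2-4) by (simp add: edge_cost_def)
qed

lemma normalised_cost_le:
  fixes A B :: real and n1 n :: nat
  assumes "0 \<le> A" "0 \<le> B" "1 \<le> n1" "n1 \<le> n" "n1 = 1 \<Longrightarrow> B = 0"
  shows "(A + 1 / (2 * (real n - 1)) * B) / real n \<le> (A + 1 / (2 * (real n1 - 1)) * B) / real n1"
proof (cases "n1 = 1")
  case True
  with assms show ?thesis by (simp add: divide_le_eq mult_le_cancel_left1)
next
  case False
  then have n1: "2 \<le> real n1" using assms(3) by simp
  have "1 / (2 * (real n - 1)) * B \<le> 1 / (2 * (real n1 - 1)) * B"
    using n1 assms by (intro mult_right_mono divide_left_mono) auto
  then have "(A + 1 / (2 * (real n - 1)) * B) / real n \<le> (A + 1 / (2 * (real n1 - 1)) * B) / real n"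
    using n1 assms by (intro divide_right_mono) auto
  also have "\<dots> \<le> (A + 1 / (2 * (real n1 - 1)) * B) / real n1"
    using n1 assms by (intro divide_left_mono add_nonneg_nonneg mult_nonneg_nonneg) auto
  finally show ?thesis .
qed

theorem lemmaC:
  fixes dX :: "'x \<Rightarrow> 'x \<Rightarrow> real" and dY :: "'y \<Rightarrow> 'y \<Rightarrow> real"
    and CX CY C2 p :: real and y0 :: 'y and n1 n :: nat
    and v u :: "nat \<Rightarrow> 'x option" and e g :: "nat \<Rightarrow> nat \<Rightarrow> 'y"
  assumes "pseudometric dX" and "pseudometric dY"
    and "\<forall>a b. dX a b \<le> CX" and "\<forall>a b. dY a b \<le> CY"
    and "p \<ge> 1" and "C2 \<ge> 0" and "C2 powr p \<ge> CX powr p + CY powr p"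
    and "1 \<le> n1" and "n1 \<le> n"
    and "is_graph y0 n1 v e" and "is_graph y0 n1 u g"
  shows "D dX C2 dY p n (ext_v n1 v) (ext_e y0 n1 e) (ext_v n1 u) (ext_e y0 n1 g)
         \<le> D dX C2 dY p n1 v e u g"
proof -
  obtain \<pi> where \<pi>: "\<pi> permutes {1..n1}"
    and D_small: "D dX C2 dY p n1 v e u g = (match_cost dX C2 dY p n1 v e u g \<pi> / real n1) powr (1 / p)"
    by (rule D_attained)
  have \<pi>_large: "\<pi> permutes {1..n}" using assms(9) by (intro permutes_subset[OF \<pi>]) auto
  have y0: "dY y0 y0 = 0" using assms(2) by (simp add: pseudometric_def)
  let ?A = "vertex_cost dX C2 p n1 v u \<pi>" and ?B = "edge_cost dY p n1 e g \<pi>"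
  have "?B = 0" if "n1 = 1"
    using \<pi> y0 assms(10,11) unfolding that
    by (intro edge_cost_single_vertex) (auto simp: is_graph_def)
  then have normalised: "(?A + 1 / (2 * (real n - 1)) * ?B) / real n
      \<le> (?A + 1 / (2 * (real n1 - 1)) * ?B) / real n1"
    using assms(8,9) by (intro normalised_cost_le vertex_cost_nonneg edge_cost_nonneg)
  have "D dX C2 dY p n (ext_v n1 v) (ext_e y0 n1 e) (ext_v n1 u) (ext_e y0 n1 g)
      \<le> (match_cost dX C2 dY p n (ext_v n1 v) (ext_e y0 n1 e) (ext_v n1 u) (ext_e y0 n1 g) \<pi> / real n)
           powr (1 / p)"
    using \<pi>_large assms(5) by (intro D_le_match_cost) auto
  also have "\<dots> = ((?A + 1 / (2 * (real n - 1)) * ?B) / real n) powr (1 / p)"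
    unfolding match_cost_split vertex_cost_ext[OF \<pi> assms(9)]
      edge_cost_ext[where dY = dY, OF \<pi> assms(9) y0] ..
  also have "\<dots> \<le> ((?A + 1 / (2 * (real n1 - 1)) * ?B) / real n1) powr (1 / p)"
    using normalised assms(5,8,9)
    by (intro powr_mono2 divide_nonneg_nonneg add_nonneg_nonneg mult_nonneg_nonneg
        vertex_cost_nonneg edge_cost_nonneg) auto
  also have "\<dots> = D dX C2 dY p n1 v e u g"
    unfolding D_small match_cost_split ..
  finally show ?thesis .
qed

end
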